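(* Let $\mathcal V$ be a variety with a difference term $d$, $A\in\mathcal V$, and $\alpha\in\operatorname{Con}A$ with $[\alpha,1_A]=0$. Let $r$ be an $\alpha$-trace, $B=A(\alpha)/\Delta_{\alpha1}$ with $x+y:=d^B(x,0,y)$ where $0$ is the $\Delta_{\alpha1}$-class of the diagonal, and $T_f(x_1/\alpha,\dots,x_n/\alpha)=\big(r(f(\bar x)),f(r(x_1),\dots,r(x_n))\big)/\Delta_{\alpha1}$ for each basic $f$ of arity $n$. Then $A\cong B\otimes^{T}A/\alpha$.
   Context: All algebras are in the sense of universal algebra. For $\alpha,\beta\in\operatorname{Con}A$, $[\alpha,\beta]$ is the term-condition (TC) commutator; $1_A$ is the total relation. $A(\alpha)=\{(x,y)\in A\times A:(x,y)\in\alpha\}$ is $\alpha$ viewed as a subalgebra of $A\times A$; $\Delta_{\alpha\beta}$ is the congruence of $A(\alpha)$ generated by $\{((u,u),(v,v)):(u,v)\in\beta\}$. An $\alpha$-trace is a map $r:A\to A$ with $(r(x),x)\in\alpha$ for all $x$ and $r(x)=r(y)$ whenever $(x,y)\in\alpha$. A difference term for $\mathcal V$ is a ternary term $d$ such that for every $A\in\mathcal V$, $\theta\in\operatorname{Con}A$, $(a,b)\in\theta$: $d(a,a,b)=b$ and $(d(a,b,b),a)\in[\theta,\theta]$. Given algebras $B,Q$ in the same signature $\tau$, a binary operation $+$ on $B$, and maps $T_f:Q^{\operatorname{ar}f}\to B$ ($f\in\tau$), the algebra $B\otimes^{T}Q$ has universe $B\times Q$ and operations $F_f((b_1,q_1),\dots,(b_n,q_n))=\big(f^B(b_1,\dots,b_n)+T_f(q_1,\dots,q_n),\,f^Q(q_1,\dots,q_n)\big)$.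 *)

theory Defs
  imports Main
begin

text \<open>An algebra is a carrier S :: 'a set together with an interpretation
F :: 'f => 'a list => 'a of the operation symbols (only meaningful on argument
lists of the right length with entries in S).\<close>

datatype ('f, 'v) trm = Var 'v | App 'f "('f, 'v) trm list"

fun eval :: "('f \<Rightarrow> 'a list \<Rightarrow> 'a) \<Rightarrow> ('v \<Rightarrow> 'a) \<Rightarrow> ('f, 'v) trm \<Rightarrow> 'a" where
  "eval F \<rho> (Var v) = \<rho> v"
| "eval F \<rho> (App f ts) = F f (map (eval F \<rho>) ts)"

fun wf_trm :: "('f \<Rightarrow> nat) \<Rightarrow> ('f, 'v) trm \<Rightarrow> bool" where
  "wf_trm ar (Var v) = True"
| "wf_trm ar (App f ts) = (length ts = ar f \<and> (\<forall>t\<in>set ts. wf_trm ar t))"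

fun tvars :: "('f, 'v) trm \<Rightarrow> 'v set" where
  "tvars (Var v) = {v}"
| "tvars (App f ts) = \<Union> (tvars ` set ts)"

definition is_alg :: "('f \<Rightarrow> nat) \<Rightarrow> 'a set \<Rightarrow> ('f \<Rightarrow> 'a list \<Rightarrow> 'a) \<Rightarrow> bool" where
  "is_alg ar S F \<longleftrightarrow> (\<forall>f xs. length xs = ar f \<longrightarrow> set xs \<subseteq> S \<longrightarrow> F f xs \<in> S)"

definition compatible :: "('f \<Rightarrow> nat) \<Rightarrow> ('f \<Rightarrow> 'a list \<Rightarrow> 'a) \<Rightarrow> 'a rel \<Rightarrow> bool" where
  "compatible ar F \<theta> \<longleftrightarrow> (\<forall>f xs ys. length xs = ar f \<longrightarrow> list_all2 (\<lambda>x y. (x, y) \<in> \<theta>) xs ys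
      \<longrightarrow> (F f xs, F f ys) \<in> \<theta>)"

definition congruence :: "('f \<Rightarrow> nat) \<Rightarrow> 'a set \<Rightarrow> ('f \<Rightarrow> 'a list \<Rightarrow> 'a) \<Rightarrow> 'a rel \<Rightarrow> bool" where
  "congruence ar S F \<theta> \<longleftrightarrow> equiv S \<theta> \<and> compatible ar F \<theta>"

text \<open>Term condition C(alpha, beta; delta): variables Inl i are the "x"-variables
(alpha-related), variables Inr j the "y"-variables (beta-related).\<close>
definition term_cond :: "('f \<Rightarrow> nat) \<Rightarrow> ('f \<Rightarrow> 'a list \<Rightarrow> 'a) \<Rightarrow> 'a rel \<Rightarrow> 'a rel \<Rightarrow> 'a rel \<Rightarrow> bool" where
  "term_cond ar F \<alpha> \<beta> \<delta> \<longleftrightarrow>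
     (\<forall>(t :: ('f, nat + nat) trm) a b u v.
        wf_trm ar t \<longrightarrow> (\<forall>i. (a i, b i) \<in> \<alpha>) \<longrightarrow> (\<forall>i. (u i, v i) \<in> \<beta>) \<longrightarrow>
        (eval F (case_sum a u) t, eval F (case_sum a v) t) \<in> \<delta> \<longrightarrow>
        (eval F (case_sum b u) t, eval F (case_sum b v) t) \<in> \<delta>)"

definition commutator :: "('f \<Rightarrow> nat) \<Rightarrow> 'a set \<Rightarrow> ('f \<Rightarrow> 'a list \<Rightarrow> 'a) \<Rightarrow> 'a rel \<Rightarrow> 'a rel \<Rightarrow> 'a rel" where
  "commutator ar S F \<alpha> \<beta> = \<Inter> {\<delta>. congruence ar S F \<delta> \<and> term_cond ar F \<alpha> \<beta> \<delta>}"

definition Cg :: "('f \<Rightarrow> nat) \<Rightarrow> 'a set \<Rightarrow> ('f \<Rightarrow> 'a list \<Rightarrow> 'a) \<Rightarrow> 'a rel \<Rightarrow> 'a rel" where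
  "Cg ar S F R = \<Inter> {\<theta>. congruence ar S F \<theta> \<and> R \<subseteq> \<theta>}"

text \<open>Operations of A(alpha), the subalgebra alpha of A x A.\<close>
definition pair_ops :: "('f \<Rightarrow> 'a list \<Rightarrow> 'a) \<Rightarrow> 'f \<Rightarrow> ('a \<times> 'a) list \<Rightarrow> 'a \<times> 'a" where
  "pair_ops F f ps = (F f (map fst ps), F f (map snd ps))"

definition Delta :: "('f \<Rightarrow> nat) \<Rightarrow> 'a set \<Rightarrow> ('f \<Rightarrow> 'a list \<Rightarrow> 'a) \<Rightarrow> 'a rel \<Rightarrow> 'a rel \<Rightarrow> ('a \<times> 'a) rel" where
  "Delta ar S F \<alpha> \<beta> = Cg ar \<alpha> (pair_ops F) {((u, u), (v, v)) | u v. (u, v) \<in> \<beta>}"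

definition rep :: "'a set \<Rightarrow> 'a" where
  "rep C = (SOME x. x \<in> C)"

definition quot_ops :: "('f \<Rightarrow> 'a list \<Rightarrow> 'a) \<Rightarrow> 'a rel \<Rightarrow> 'f \<Rightarrow> 'a set list \<Rightarrow> 'a set" where
  "quot_ops F \<theta> f Cs = \<theta> `` {F f (map rep Cs)}"

definition is_trace :: "'a set \<Rightarrow> 'a rel \<Rightarrow> ('a \<Rightarrow> 'a) \<Rightarrow> bool" where
  "is_trace S \<alpha> r \<longleftrightarrow> (\<forall>x\<in>S. (r x, x) \<in> \<alpha>) \<and> (\<forall>x y. (x, y) \<in> \<alpha> \<longrightarrow> r x = r y)"

definition app3 :: "('f \<Rightarrow> 'a list \<Rightarrow> 'a) \<Rightarrow> ('f, nat) trm \<Rightarrow> 'a \<Rightarrow> 'a \<Rightarrow> 'a \<Rightarrow> 'a" where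
  "app3 F d a b c = eval F (\<lambda>i. if i = 0 then a else if i = 1 then b else c) d"

definition is_diff_term :: "('f \<Rightarrow> nat) \<Rightarrow> 'a set \<Rightarrow> ('f \<Rightarrow> 'a list \<Rightarrow> 'a) \<Rightarrow> ('f, nat) trm \<Rightarrow> bool" where
  "is_diff_term ar S F d \<longleftrightarrow>
     (\<forall>\<theta>. congruence ar S F \<theta> \<longrightarrow>
        (\<forall>(a, b) \<in> \<theta>. app3 F d a a b = b \<and> (app3 F d a b b, a) \<in> commutator ar S F \<theta> \<theta>))"

text \<open>Satisfaction of a set of identities; the variety is Mod(E).\<close>
definition models :: "('f \<Rightarrow> nat) \<Rightarrow> 'a set \<Rightarrow> ('f \<Rightarrow> 'a list \<Rightarrow> 'a) \<Rightarrow> (('f, nat) trm \<times> ('f, nat) trm) set \<Rightarrow> bool" where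
  "models ar S F E \<longleftrightarrow> (\<forall>(s, t) \<in> E. \<forall>\<rho>. (\<forall>i. \<rho> i \<in> S) \<longrightarrow> eval F \<rho> s = eval F \<rho> t)"

text \<open>d is a difference term for all members of the variety Mod(E) whose carrier lives in type 'b.\<close>
definition diff_term_variety :: "('f \<Rightarrow> nat) \<Rightarrow> (('f, nat) trm \<times> ('f, nat) trm) set \<Rightarrow> ('f, nat) trm \<Rightarrow> 'b itself \<Rightarrow> bool" where
  "diff_term_variety ar E d _ \<longleftrightarrow> wf_trm ar d \<and> tvars d \<subseteq> {0, 1, 2} \<and>
     (\<forall>(S :: 'b set) F. is_alg ar S F \<and> models ar S F E \<longrightarrow> is_diff_term ar S F d)"

definition tensor_ops :: "('f \<Rightarrow> 'b list \<Rightarrow> 'b) \<Rightarrow> ('f \<Rightarrow> 'q list \<Rightarrow> 'q) \<Rightarrow> ('b \<Rightarrow> 'b \<Rightarrow> 'b)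
     \<Rightarrow> ('f \<Rightarrow> 'q list \<Rightarrow> 'b) \<Rightarrow> 'f \<Rightarrow> ('b \<times> 'q) list \<Rightarrow> 'b \<times> 'q" where
  "tensor_ops FB FQ add T f ps =
     (add (FB f (map fst ps)) (T f (map snd ps)), FQ f (map snd ps))"

definition hom :: "('f \<Rightarrow> nat) \<Rightarrow> 'a set \<Rightarrow> ('f \<Rightarrow> 'a list \<Rightarrow> 'a) \<Rightarrow> ('f \<Rightarrow> 'b list \<Rightarrow> 'b) \<Rightarrow> ('a \<Rightarrow> 'b) \<Rightarrow> bool" where
  "hom ar S F F' h \<longleftrightarrow> (\<forall>f xs. length xs = ar f \<longrightarrow> set xs \<subseteq> S \<longrightarrow> h (F f xs) = F' f (map h xs))"

definition isomorphic :: "('f \<Rightarrow> nat) \<Rightarrow> 'a set \<Rightarrow> ('f \<Rightarrow> 'a list \<Rightarrow> 'a) \<Rightarrow> 'b set \<Rightarrow> ('f \<Rightarrow> 'b list \<Rightarrow> 'b) \<Rightarrow> bool" where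
  "isomorphic ar S F S' F' \<longleftrightarrow> (\<exists>h. bij_betw h S S' \<and> hom ar S F F' h)"

end

theory Submission
  imports Defs
begin

text \<open>Since [\<alpha>, 1] = 0, the difference term is affine on \<alpha>-blocks: for \<alpha>-related tuples a, b
  and any c, e one has d(t(a, c), t(b, c), t(b, e)) = t(a, e) for every term t.  Hence the relation
  ((a, b), (a', b')) with b' = d(b, a, a') is a congruence of A(\<alpha>) containing the generators of
  \<Delta>(\<alpha>, 1), and in fact equals \<Delta>(\<alpha>, 1); so a class of \<Delta>(\<alpha>, 1) is determined by any one of
  its first coordinates.  It follows that x \<mapsto> ((r x, x)/\<Delta>(\<alpha>, 1), x/\<alpha>) is a bijection from A
  onto B \<times> A/\<alpha>, and writing (r f(x), f(x)) as d((f(r x), f(x)), (f(r x), f(r x)), (r f(x), f(r x)))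
  shows that it is a homomorphism onto B \<otimes>T A/\<alpha>.\<close>

section \<open>Term operations\<close>

lemma eval_closed:
  assumes "is_alg ar S F" "wf_trm ar t" "\<And>v. \<rho> v \<in> S"
  shows "eval F \<rho> t \<in> S"
  using assms(2)
proof (induction t)
  case (App f ts)
  then have "set (map (eval F \<rho>) ts) \<subseteq> S" by auto
  then show ?case using assms(1) App.prems by (simp add: is_alg_def)
qed (use assms(3) in simp)

lemma eval_compatible:
  assumes "compatible ar F \<theta>" "wf_trm ar t" "\<And>v. (\<rho> v, \<rho>' v) \<in> \<theta>"
  shows "(eval F \<rho> t, eval F \<rho>' t) \<in> \<theta>"
  using assms(2)
proof (induction t)
  case (App f ts)
  then have "list_all2 (\<lambda>x y. (x, y) \<in> \<theta>) (map (eval F \<rho>) ts) (map (eval F \<rho>') ts)"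
    by (auto simp: list_all2_map1 list_all2_map2 list_all2_same)
  then show ?case using assms(1) App.prems by (auto simp: compatible_def)
qed (use assms(3) in simp)

lemma eval_pair_ops: "eval (pair_ops F) \<rho> t = (eval F (fst \<circ> \<rho>) t, eval F (snd \<circ> \<rho>) t)"
  by (induction t) (simp_all add: pair_ops_def comp_def cong: map_cong)

fun tsubst :: "('v \<Rightarrow> ('f, 'w) trm) \<Rightarrow> ('f, 'v) trm \<Rightarrow> ('f, 'w) trm" where
  "tsubst \<sigma> (Var v) = \<sigma> v"
| "tsubst \<sigma> (App f ts) = App f (map (tsubst \<sigma>) ts)"

lemma eval_tsubst: "eval F \<rho> (tsubst \<sigma> t) = eval F (\<lambda>v. eval F \<rho> (\<sigma> v)) t"
  by (induction t) (simp_all cong: map_cong)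

lemma wf_tsubst: "wf_trm ar t \<Longrightarrow> (\<And>v. wf_trm ar (\<sigma> v)) \<Longrightarrow> wf_trm ar (tsubst \<sigma> t)"
  by (induction t) auto

lemma eval_rename: "eval F \<rho> (tsubst (Var \<circ> \<sigma>) t) = eval F (\<rho> \<circ> \<sigma>) t"
  by (simp add: eval_tsubst comp_def)

definition subst3 :: "('f, nat) trm \<Rightarrow> ('f, 'w) trm \<Rightarrow> ('f, 'w) trm \<Rightarrow> ('f, 'w) trm \<Rightarrow> ('f, 'w) trm" where
  "subst3 d s1 s2 s3 = tsubst (\<lambda>i. if i = 0 then s1 else if i = 1 then s2 else s3) d"

lemma eval_subst3:
  "eval F \<rho> (subst3 d s1 s2 s3) = app3 F d (eval F \<rho> s1) (eval F \<rho> s2) (eval F \<rho> s3)"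
  unfolding subst3_def app3_def eval_tsubst by (rule arg_cong[where f = "\<lambda>\<rho>. eval F \<rho> d"]) auto

lemma wf_subst3:
  "wf_trm ar d \<Longrightarrow> wf_trm ar s1 \<Longrightarrow> wf_trm ar s2 \<Longrightarrow> wf_trm ar s3 \<Longrightarrow> wf_trm ar (subst3 d s1 s2 s3)"
  unfolding subst3_def by (rule wf_tsubst) auto

lemma app3_compatible:
  "compatible ar F \<theta> \<Longrightarrow> wf_trm ar d \<Longrightarrow> (a, a') \<in> \<theta> \<Longrightarrow> (b, b') \<in> \<theta> \<Longrightarrow> (c, c') \<in> \<theta>
    \<Longrightarrow> (app3 F d a b c, app3 F d a' b' c') \<in> \<theta>"
  unfolding app3_def by (rule eval_compatible) auto

lemma app3_pair_ops:
  "app3 (pair_ops F) d (a1, b1) (a2, b2) (a3, b3) = (app3 F d a1 a2 a3, app3 F d b1 b2 b3)"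
  unfolding app3_def eval_pair_ops
  by (auto intro!: arg_cong[where f = "\<lambda>\<rho>. eval F \<rho> d"])

section \<open>Quotients, generated congruences and the commutator\<close>

lemma rep_related: "equiv S \<theta> \<Longrightarrow> x \<in> S \<Longrightarrow> (x, rep (\<theta> `` {x})) \<in> \<theta>"
  unfolding rep_def by (metis Image_singleton_iff equiv_class_self someI_ex)

lemma quot_ops_classes:
  assumes "congruence ar S F \<theta>" "length xs = ar f" "set xs \<subseteq> S"
  shows "quot_ops F \<theta> f (map (\<lambda>x. \<theta> `` {x}) xs) = \<theta> `` {F f xs}"
proof -
  have eq: "equiv S \<theta>" and cp: "compatible ar F \<theta>"
    using assms(1) by (auto simp: congruence_def)
  have "list_all2 (\<lambda>x y. (x, y) \<in> \<theta>) xs (map (rep \<circ> (\<lambda>x. \<theta> `` {x})) xs)"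
    using assms(3) rep_related[OF eq] by (auto simp: list_all2_map2 list_all2_same)
  then have "(F f xs, F f (map rep (map (\<lambda>x. \<theta> `` {x}) xs))) \<in> \<theta>"
    using cp assms(2) by (simp add: compatible_def)
  then show ?thesis unfolding quot_ops_def using eq equiv_class_eq_iff by metis
qed

lemma eval_quot_ops:
  assumes alg: "is_alg ar S F" and cong: "congruence ar S F \<theta>" and "wf_trm ar t"
    and \<rho>: "\<And>v. \<rho> v \<in> S"
  shows "eval (quot_ops F \<theta>) (\<lambda>v. \<theta> `` {\<rho> v}) t = \<theta> `` {eval F \<rho> t}"
  using \<open>wf_trm ar t\<close>
proof (induction t)
  case (App f ts)
  have m: "map (eval (quot_ops F \<theta>) (\<lambda>v. \<theta> `` {\<rho> v})) ts = map (\<lambda>x. \<theta> `` {x}) (map (eval F \<rho>) ts)"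
    using App by auto
  have "set (map (eval F \<rho>) ts) \<subseteq> S"
    using App.prems by (auto intro: eval_closed[OF alg] \<rho>)
  with App.prems show ?case
    unfolding eval.simps m by (intro quot_ops_classes[OF cong]) auto
qed simp

lemma app3_quot_ops:
  assumes "is_alg ar S F" "congruence ar S F \<theta>" "wf_trm ar d" "a \<in> S" "b \<in> S" "c \<in> S"
  shows "app3 (quot_ops F \<theta>) d (\<theta> `` {a}) (\<theta> `` {b}) (\<theta> `` {c}) = \<theta> `` {app3 F d a b c}"
proof -
  have classes: "(\<lambda>i. if i = 0 then \<theta> `` {a} else if i = 1 then \<theta> `` {b} else \<theta> `` {c}) =
        (\<lambda>v. \<theta> `` {(\<lambda>i. if i = 0 then a else if i = 1 then b else c) v})"
    by (rule ext) simp
  show ?thesis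
    unfolding app3_def classes by (rule eval_quot_ops[OF assms(1-3)]) (use assms(4-6) in auto)
qed

lemma congruence_Cg:
  assumes "congruence ar S F \<theta>" "R \<subseteq> \<theta>"
  shows "congruence ar S F (Cg ar S F R)"
proof -
  let ?X = "{\<theta>. congruence ar S F \<theta> \<and> R \<subseteq> \<theta>}"
  have eqs: "equiv S \<theta>'" if "\<theta>' \<in> ?X" for \<theta>'
    using that by (simp add: congruence_def)
  have "\<theta> \<in> ?X" using assms by auto
  then have "equiv S (\<Inter> ?X)"
    unfolding equiv_def refl_on_def sym_def trans_def
  proof (intro conjI allI impI ballI)
    show "\<Inter> ?X \<subseteq> S \<times> S" using \<open>\<theta> \<in> ?X\<close> eqs[OF \<open>\<theta> \<in> ?X\<close>] by (auto simp: equiv_def refl_on_def)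
  qed (use eqs in \<open>(simp add: equiv_def refl_on_def; meson symD transD)+\<close>)
  moreover have "compatible ar F (\<Inter> ?X)"
    unfolding compatible_def
  proof (intro allI impI InterI)
    fix f xs ys \<theta>'
    assume "length xs = ar f" "list_all2 (\<lambda>x y. (x, y) \<in> \<Inter> ?X) xs ys" "\<theta>' \<in> ?X"
    moreover from this have "list_all2 (\<lambda>x y. (x, y) \<in> \<theta>') xs ys"
      by (auto elim: list_all2_mono)
    ultimately show "(F f xs, F f ys) \<in> \<theta>'"
      by (simp add: congruence_def compatible_def)
  qed
  ultimately show ?thesis unfolding Cg_def congruence_def by simp
qed

lemma Cg_least: "congruence ar S F \<theta> \<Longrightarrow> R \<subseteq> \<theta> \<Longrightarrow> Cg ar S F R \<subseteq> \<theta>"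
  unfolding Cg_def by blast

lemma generators_subset_Cg: "R \<subseteq> Cg ar S F R"
  unfolding Cg_def by blast

lemma congruence_total:
  assumes "is_alg ar S F"
  shows "congruence ar S F (S \<times> S)"
  unfolding congruence_def compatible_def
proof (intro conjI allI impI)
  show "equiv S (S \<times> S)" by (auto simp: equiv_def refl_on_def sym_def trans_def)
  fix f xs ys assume "length xs = ar f" "list_all2 (\<lambda>x y. (x, y) \<in> S \<times> S) xs ys"
  then have "set xs \<subseteq> S" "set ys \<subseteq> S" "length ys = ar f"
    by (auto simp: list_all2_conv_all_nth in_set_conv_nth)
  with \<open>length xs = ar f\<close> show "(F f xs, F f ys) \<in> S \<times> S"
    using assms by (simp add: is_alg_def)
qed

lemma term_cond_commutator: "term_cond ar F \<alpha> \<beta> (commutator ar S F \<alpha> \<beta>)"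
  unfolding term_cond_def commutator_def by blast

lemma commutator_mono:
  assumes "\<beta> \<subseteq> \<beta>'"
  shows "commutator ar S F \<alpha> \<beta> \<subseteq> commutator ar S F \<alpha> \<beta>'"
proof -
  have "term_cond ar F \<alpha> \<beta>' \<delta> \<Longrightarrow> term_cond ar F \<alpha> \<beta> \<delta>" for \<delta>
    using assms unfolding term_cond_def by blast
  then show ?thesis unfolding commutator_def by blast
qed

lemma is_alg_pair_ops:
  assumes "compatible ar F \<alpha>"
  shows "is_alg ar \<alpha> (pair_ops F)"
  unfolding is_alg_def
proof (intro allI impI)
  fix f ps assume "length ps = ar f" "set ps \<subseteq> \<alpha>"
  moreover from this have "list_all2 (\<lambda>x y. (x, y) \<in> \<alpha>) (map fst ps) (map snd ps)"
    by (auto simp: list_all2_map1 list_all2_map2 list_all2_same)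
  ultimately show "pair_ops F f ps \<in> \<alpha>"
    using assms by (simp add: compatible_def pair_ops_def)
qed

section \<open>Central congruences in the presence of a difference term\<close>

locale central_congruence =
  fixes ar :: "'f \<Rightarrow> nat" and S :: "'a set" and F :: "'f \<Rightarrow> 'a list \<Rightarrow> 'a"
    and \<alpha> :: "'a rel" and d :: "('f, nat) trm"
  assumes alg: "is_alg ar S F"
    and cong: "congruence ar S F \<alpha>"
    and central: "commutator ar S F \<alpha> (S \<times> S) = Id_on S"
    and wf_d: "wf_trm ar d"
    and diff_term: "is_diff_term ar S F d"
begin

abbreviation D :: "'a \<Rightarrow> 'a \<Rightarrow> 'a \<Rightarrow> 'a" where
  "D \<equiv> app3 F d"

lemma equiv_\<alpha>: "equiv S \<alpha>" and compatible_\<alpha>: "compatible ar F \<alpha>"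
  using cong by (auto simp: congruence_def)

lemma \<alpha>_carrier: "(x, y) \<in> \<alpha> \<Longrightarrow> x \<in> S \<and> y \<in> S"
  using equiv_\<alpha> by (auto simp: equiv_def refl_on_def)

lemma \<alpha>_refl: "x \<in> S \<Longrightarrow> (x, x) \<in> \<alpha>"
  using equiv_\<alpha> by (auto simp: equiv_def refl_on_def)

lemma \<alpha>_sym: "(x, y) \<in> \<alpha> \<Longrightarrow> (y, x) \<in> \<alpha>"
  using equiv_\<alpha> by (auto simp: equiv_def dest: symD)

lemma \<alpha>_trans: "(x, y) \<in> \<alpha> \<Longrightarrow> (y, z) \<in> \<alpha> \<Longrightarrow> (x, z) \<in> \<alpha>"
  using equiv_\<alpha> by (auto simp: equiv_def dest: transD)

lemma D_eq_third: "a \<in> S \<Longrightarrow> b \<in> S \<Longrightarrow> D a a b = b"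
  using diff_term congruence_total[OF alg] unfolding is_diff_term_def by blast

lemma D_eq_first:
  assumes "(a, b) \<in> \<alpha>"
  shows "D a b b = a"
proof -
  have "(D a b b, a) \<in> commutator ar S F \<alpha> \<alpha>"
    using diff_term cong assms by (auto simp: is_diff_term_def)
  moreover have "\<alpha> \<subseteq> S \<times> S"
    using \<alpha>_carrier by auto
  then have "commutator ar S F \<alpha> \<alpha> \<subseteq> Id_on S"
    using commutator_mono central by metis
  ultimately show ?thesis by auto
qed

lemma eval_sum_closed:
  "wf_trm ar t \<Longrightarrow> (\<And>i. x i \<in> S) \<Longrightarrow> (\<And>j. y j \<in> S) \<Longrightarrow> eval F (case_sum x y) t \<in> S"
  by (rule eval_closed[OF alg]) (simp_all split: sum.split)

lemma term_cond_central:
  fixes t :: "('f, nat + nat) trm"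
  assumes t: "wf_trm ar t" and ab: "\<And>i. (a i, b i) \<in> \<alpha>" and "\<And>j. u j \<in> S" "\<And>j. v j \<in> S"
    and eq: "eval F (case_sum a u) t = eval F (case_sum a v) t"
  shows "eval F (case_sum b u) t = eval F (case_sum b v) t"
proof -
  have "term_cond ar F \<alpha> (S \<times> S) (Id_on S)"
    using term_cond_commutator[of ar F \<alpha> "S \<times> S" S] central by simp
  note tc = this[unfolded term_cond_def, rule_format]
  have uv: "(u j, v j) \<in> S \<times> S" for j
    using assms(3,4) by simp
  have "eval F (case_sum a u) t \<in> S"
    using ab \<alpha>_carrier assms(3) by (intro eval_sum_closed[OF t]) blast+
  then have "(eval F (case_sum a u) t, eval F (case_sum a v) t) \<in> Id_on S"
    unfolding eq by (rule Id_onI)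
  then have "(eval F (case_sum b u) t, eval F (case_sum b v) t) \<in> Id_on S"
    by (rule tc[OF t ab uv])
  then show ?thesis by (simp add: Id_on_iff)
qed

text \<open>The term condition applied to d(t(x0, y0), t(x1, y0), t(x1, y1)), where t(x0, y0), t(x1, y0) and
  t(x1, y1) are copies of t on the even and odd variables.\<close>

lemma D_eval_translation:
  fixes t :: "('f, nat + nat) trm"
  assumes t: "wf_trm ar t" and ab: "\<And>i. (a i, b i) \<in> \<alpha>" and c: "\<And>j. c j \<in> S" and e: "\<And>j. e j \<in> S"
  shows "D (eval F (case_sum a c) t) (eval F (case_sum b c) t) (eval F (case_sum b e) t) = eval F (case_sum a e) t"
proof -
  define ren where "ren g h = tsubst (Var \<circ> map_sum g h) t" for g h :: "nat \<Rightarrow> nat"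
  have eval_ren: "eval F (case_sum x y) (ren g h) = eval F (case_sum (x \<circ> g) (y \<circ> h)) t" for x y g h
    unfolding ren_def eval_rename case_sum_o_map_sum ..
  define t' where "t' = subst3 d (ren (\<lambda>i. 2 * i) (\<lambda>j. 2 * j)) (ren (\<lambda>i. 2 * i + 1) (\<lambda>j. 2 * j))
    (ren (\<lambda>i. 2 * i + 1) (\<lambda>j. 2 * j + 1))"
  have t': "wf_trm ar t'"
    unfolding t'_def ren_def by (intro wf_subst3 wf_d wf_tsubst t) simp_all
  have eval_t': "eval F (case_sum x y) t' = D (eval F (case_sum (x \<circ> (\<lambda>i. 2 * i)) (y \<circ> (\<lambda>j. 2 * j))) t)
    (eval F (case_sum (x \<circ> (\<lambda>i. 2 * i + 1)) (y \<circ> (\<lambda>j. 2 * j))) t)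
    (eval F (case_sum (x \<circ> (\<lambda>i. 2 * i + 1)) (y \<circ> (\<lambda>j. 2 * j + 1))) t)" for x y
    unfolding t'_def eval_subst3 eval_ren ..
  define xb where "xb i = b (i div 2)" for i :: nat
  define xa where "xa i = (if even i then a (i div 2) else b (i div 2))" for i :: nat
  define u where "u j = (if even j then c (j div 2) else e (j div 2))" for j :: nat
  define v where "v j = e (j div 2)" for j :: nat
  have parts: "xb \<circ> (\<lambda>i. 2 * i) = b" "xb \<circ> (\<lambda>i. 2 * i + 1) = b"
    "xa \<circ> (\<lambda>i. 2 * i) = a" "xa \<circ> (\<lambda>i. 2 * i + 1) = b"
    "u \<circ> (\<lambda>j. 2 * j) = c" "u \<circ> (\<lambda>j. 2 * j + 1) = e" "v \<circ> (\<lambda>j. 2 * j) = e" "v \<circ> (\<lambda>j. 2 * j + 1) = e"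
    by (auto simp: xb_def xa_def u_def v_def)
  have aS: "a i \<in> S" and bS: "b i \<in> S" for i
    using ab \<alpha>_carrier by blast+
  have closed: "eval F (case_sum x y) t \<in> S" if "x \<in> {a, b}" "y \<in> {c, e}" for x y
    using that aS bS c e by (auto intro: eval_sum_closed[OF t])
  have "eval F (case_sum xb u) t' = eval F (case_sum xb v) t'"
    unfolding eval_t' parts using D_eq_third closed by simp
  then have "eval F (case_sum xa u) t' = eval F (case_sum xa v) t'"
  proof (rule term_cond_central[OF t', rotated -1])
    show "(xb i, xa i) \<in> \<alpha>" for i
      unfolding xb_def xa_def using ab \<alpha>_sym \<alpha>_refl bS by auto
  qed (auto simp: u_def v_def c e)
  moreover have "(eval F (case_sum a e) t, eval F (case_sum b e) t) \<in> \<alpha>"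
    by (rule eval_compatible[OF compatible_\<alpha> t]) (simp add: ab \<alpha>_refl e split: sum.split)
  ultimately show ?thesis
    unfolding eval_t' parts using D_eq_first by simp
qed

lemma D_D_translation:
  assumes "(p, p') \<in> \<alpha>" "c1 \<in> S" "c2 \<in> S" "e1 \<in> S" "e2 \<in> S"
  shows "D (D p c1 c2) (D p' c1 c2) (D p' e1 e2) = D p e1 e2"
proof -
  define t :: "('f, nat + nat) trm" where "t = subst3 d (Var (Inl 0)) (Var (Inr 0)) (Var (Inr 1))"
  have "wf_trm ar t"
    unfolding t_def by (intro wf_subst3 wf_d) simp_all
  from D_eval_translation[OF this, of "\<lambda>_. p" "\<lambda>_. p'" "\<lambda>j. if j = 0 then c1 else c2"
      "\<lambda>j. if j = 0 then e1 else e2"]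
  show ?thesis
    using assms by (simp add: t_def eval_subst3)
qed

text \<open>D_eval_translation for the term f(d(x_i, y_2i, y_2i+1)); the variables beyond the arity of f
  are unused and receive the dummy value F f as.\<close>

lemma F_D_interchange:
  assumes lengths: "length bs = ar f" "length as = ar f" "length cs = ar f"
    and ba: "\<And>i. i < ar f \<Longrightarrow> (bs ! i, as ! i) \<in> \<alpha>" and cs: "set cs \<subseteq> S"
  shows "F f (map (\<lambda>i. D (bs ! i) (as ! i) (cs ! i)) [0..<ar f]) = D (F f bs) (F f as) (F f cs)"
proof -
  define n where "n = ar f"
  have asS: "set as \<subseteq> S"
    using ba \<alpha>_carrier lengths by (metis in_set_conv_nth subsetI)
  define pad where "pad = F f as"
  have pad: "pad \<in> S"
    unfolding pad_def using alg lengths asS by (simp add: is_alg_def)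
  define t :: "('f, nat + nat) trm"
    where "t = App f (map (\<lambda>i. subst3 d (Var (Inl i)) (Var (Inr (2 * i))) (Var (Inr (2 * i + 1)))) [0..<n])"
  have t: "wf_trm ar t"
    unfolding t_def n_def by (auto intro!: wf_subst3 wf_d)
  have eval_t: "eval F (case_sum x y) t = F f (map (\<lambda>i. D (x i) (y (2 * i)) (y (2 * i + 1))) [0..<n])" for x y
    unfolding t_def by (simp add: eval_subst3 comp_def)
  define xa where "xa i = (if i < n then bs ! i else pad)" for i
  define xb where "xb i = (if i < n then as ! i else pad)" for i
  define yc where "yc j = (if j div 2 < n then as ! (j div 2) else pad)" for j
  define ye where "ye j = (if j div 2 < n then (if even j then as ! (j div 2) else cs ! (j div 2)) else pad)" for j
  have "D (eval F (case_sum xa yc) t) (eval F (case_sum xb yc) t) (eval F (case_sum xb ye) t)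
      = eval F (case_sum xa ye) t"
  proof (rule D_eval_translation[OF t])
    show "(xa i, xb i) \<in> \<alpha>" for i
      unfolding xa_def xb_def n_def using ba pad \<alpha>_refl by auto
    show "yc j \<in> S" "ye j \<in> S" for j
      unfolding yc_def ye_def n_def using pad asS cs lengths by (auto simp: subset_iff)
  qed
  moreover have "map (\<lambda>i. D (xa i) (yc (2 * i)) (yc (2 * i + 1))) [0..<n] = bs"
    by (rule nth_equalityI) (auto simp: xa_def yc_def n_def lengths D_eq_first ba)
  moreover have "map (\<lambda>i. D (xb i) (yc (2 * i)) (yc (2 * i + 1))) [0..<n] = as"
    by (rule nth_equalityI) (use asS in \<open>auto simp: xb_def yc_def n_def lengths D_eq_third subset_iff\<close>)
  moreover have "map (\<lambda>i. D (xb i) (ye (2 * i)) (ye (2 * i + 1))) [0..<n] = cs"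
    by (rule nth_equalityI) (use asS cs in \<open>auto simp: xb_def ye_def n_def lengths D_eq_third subset_iff\<close>)
  moreover have "map (\<lambda>i. D (xa i) (ye (2 * i)) (ye (2 * i + 1))) [0..<n]
      = map (\<lambda>i. D (bs ! i) (as ! i) (cs ! i)) [0..<ar f]"
    by (rule map_cong) (auto simp: xa_def ye_def n_def)
  ultimately show ?thesis
    unfolding eval_t by simp
qed

definition diff_rel :: "('a \<times> 'a) rel" where
  "diff_rel = {((a, b), (a', b')). (a, b) \<in> \<alpha> \<and> (a', b') \<in> \<alpha> \<and> b' = D b a a'}"

lemma diff_rel_iff:
  "((a, b), (a', b')) \<in> diff_rel \<longleftrightarrow> (a, b) \<in> \<alpha> \<and> (a', b') \<in> \<alpha> \<and> b' = D b a a'"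
  by (simp add: diff_rel_def)

lemma equiv_diff_rel: "equiv \<alpha> diff_rel"
proof (rule equivI)
  show "diff_rel \<subseteq> \<alpha> \<times> \<alpha>"
    unfolding diff_rel_def by auto
  show "refl_on \<alpha> diff_rel"
    unfolding refl_on_def diff_rel_def using D_eq_first \<alpha>_sym by auto
  show "sym diff_rel"
  proof (rule symI, clarify)
    fix a b a' b' assume "((a, b), (a', b')) \<in> diff_rel"
    then have ab: "(a, b) \<in> \<alpha>" and a'b': "(a', b') \<in> \<alpha>" and b': "b' = D b a a'"
      by (auto simp: diff_rel_iff)
    have "D b' a' a = D (D b a a') (D a a a') (D a a a)"
      using b' ab a'b' D_eq_third \<alpha>_carrier by auto
    also have "\<dots> = D b a a"
      using D_D_translation ab a'b' \<alpha>_carrier \<alpha>_sym by blast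
    also have "\<dots> = b"
      using D_eq_first \<alpha>_sym ab by blast
    finally show "((a', b'), (a, b)) \<in> diff_rel"
      using ab a'b' by (simp add: diff_rel_iff)
  qed
  show "trans diff_rel"
  proof (rule transI, clarify)
    fix a b a' b' a'' b''
    assume "((a, b), (a', b')) \<in> diff_rel" "((a', b'), (a'', b'')) \<in> diff_rel"
    then have ab: "(a, b) \<in> \<alpha>" and "(a', b') \<in> \<alpha>" "(a'', b'') \<in> \<alpha>"
      and b': "b' = D b a a'" and b'': "b'' = D b' a' a''"
      by (auto simp: diff_rel_iff)
    then have "b'' = D (D b a a') (D a a a') (D a a a'')"
      using D_eq_third \<alpha>_carrier by auto
    also have "\<dots> = D b a a''"
      using D_D_translation ab \<open>(a', b') \<in> \<alpha>\<close> \<open>(a'', b'') \<in> \<alpha>\<close> \<alpha>_carrier \<alpha>_sym by blast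
    finally show "((a, b), (a'', b'')) \<in> diff_rel"
      using ab \<open>(a'', b'') \<in> \<alpha>\<close> by (simp add: diff_rel_iff)
  qed
qed

lemma compatible_diff_rel: "compatible ar (pair_ops F) diff_rel"
  unfolding compatible_def
proof (intro allI impI)
  fix f ps qs assume lp: "length ps = ar f" and rel: "list_all2 (\<lambda>x y. (x, y) \<in> diff_rel) ps qs"
  have lq: "length qs = ar f"
    using rel lp by (simp add: list_all2_lengthD)
  have nth: "(ps ! i, qs ! i) \<in> diff_rel" if "i < ar f" for i
    using rel lp that by (simp add: list_all2_conv_all_nth)
  moreover have "diff_rel \<subseteq> \<alpha> \<times> \<alpha>"
    using equiv_diff_rel by (simp add: equiv_def)
  ultimately have ps: "set ps \<subseteq> \<alpha>" and qs: "set qs \<subseteq> \<alpha>"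
    using lp lq by (fastforce simp: in_set_conv_nth)+
  have ba: "(snd (ps ! i), fst (ps ! i)) \<in> \<alpha>" and snd_q: "snd (qs ! i) = D (snd (ps ! i)) (fst (ps ! i)) (fst (qs ! i))"
    if "i < ar f" for i
    using nth[OF that] \<alpha>_sym by (auto simp: diff_rel_def split: prod.splits)
  have "map snd qs = map (\<lambda>i. D (map snd ps ! i) (map fst ps ! i) (map fst qs ! i)) [0..<ar f]"
    by (rule nth_equalityI) (simp_all add: lp lq snd_q)
  also have "F f \<dots> = D (F f (map snd ps)) (F f (map fst ps)) (F f (map fst qs))"
    by (rule F_D_interchange) (use lp lq qs \<alpha>_carrier ba in auto)
  finally have "F f (map snd qs) = D (F f (map snd ps)) (F f (map fst ps)) (F f (map fst qs))" .
  moreover have "pair_ops F f ps \<in> \<alpha>" "pair_ops F f qs \<in> \<alpha>"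
    using is_alg_pair_ops[OF compatible_\<alpha>] ps qs lp lq by (simp_all add: is_alg_def)
  ultimately show "(pair_ops F f ps, pair_ops F f qs) \<in> diff_rel"
    unfolding pair_ops_def diff_rel_iff by simp
qed

abbreviation \<Delta> :: "('a \<times> 'a) rel" where
  "\<Delta> \<equiv> Delta ar S F \<alpha> (S \<times> S)"

lemma congruence_Delta: "congruence ar \<alpha> (pair_ops F) \<Delta>"
  unfolding Delta_def
  by (rule congruence_Cg[OF congruence_total[OF is_alg_pair_ops[OF compatible_\<alpha>]]]) (auto simp: \<alpha>_refl)

lemma equiv_Delta: "equiv \<alpha> \<Delta>"
  using congruence_Delta by (simp add: congruence_def)

lemma diagonal_in_Delta: "u \<in> S \<Longrightarrow> v \<in> S \<Longrightarrow> ((u, u), (v, v)) \<in> \<Delta>"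
  unfolding Delta_def by (rule subsetD[OF generators_subset_Cg]) auto

lemma Delta_subset_diff_rel: "\<Delta> \<subseteq> diff_rel"
  unfolding Delta_def
proof (rule Cg_least)
  show "congruence ar \<alpha> (pair_ops F) diff_rel"
    by (simp add: congruence_def equiv_diff_rel compatible_diff_rel)
  show "{((u, u), (v, v)) |u v. (u, v) \<in> S \<times> S} \<subseteq> diff_rel"
    by (auto simp: diff_rel_iff \<alpha>_refl D_eq_third)
qed

lemma translate_in_Delta:
  assumes ab: "(a, b) \<in> \<alpha>" and c: "c \<in> S"
  shows "((a, b), (c, D b a c)) \<in> \<Delta>"
proof -
  have aS: "a \<in> S" using ab \<alpha>_carrier by blast
  have "(app3 (pair_ops F) d (a, b) (a, a) (a, a), app3 (pair_ops F) d (a, b) (a, a) (c, c)) \<in> \<Delta>"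
  proof (rule app3_compatible[OF _ wf_d])
    show "compatible ar (pair_ops F) \<Delta>"
      using congruence_Delta by (simp add: congruence_def)
    show "((a, b), (a, b)) \<in> \<Delta>"
      using equiv_Delta ab by (simp add: equiv_def refl_on_def)
  qed (use diagonal_in_Delta aS c in auto)
  then show ?thesis
    unfolding app3_pair_ops using D_eq_third D_eq_first \<alpha>_sym ab aS c by simp
qed

lemma Delta_eq_diff_rel: "\<Delta> = diff_rel"
proof
  show "diff_rel \<subseteq> \<Delta>"
  proof (clarify)
    fix a b a' b' assume "((a, b), (a', b')) \<in> diff_rel"
    then have "(a, b) \<in> \<alpha>" "a' \<in> S" "b' = D b a a'"
      using \<alpha>_carrier by (auto simp: diff_rel_iff)
    then show "((a, b), (a', b')) \<in> \<Delta>"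
      using translate_in_Delta by simp
  qed
qed (rule Delta_subset_diff_rel)

section \<open>The decomposition of A\<close>

abbreviation zero_B :: "('a \<times> 'a) set" where
  "zero_B \<equiv> \<Delta> `` Id_on S"

abbreviation add_B :: "('a \<times> 'a) set \<Rightarrow> ('a \<times> 'a) set \<Rightarrow> ('a \<times> 'a) set" where
  "add_B x y \<equiv> app3 (quot_ops (pair_ops F) \<Delta>) d x zero_B y"

lemma zero_B_eq:
  assumes "p \<in> S"
  shows "zero_B = \<Delta> `` {(p, p)}"
proof
  show "zero_B \<subseteq> \<Delta> `` {(p, p)}"
  proof
    fix z assume "z \<in> zero_B"
    then obtain u where "u \<in> S" "((u, u), z) \<in> \<Delta>" by (auto simp: Id_on_def)
    moreover have "((p, p), (u, u)) \<in> \<Delta>"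
      using diagonal_in_Delta assms \<open>u \<in> S\<close> by blast
    ultimately show "z \<in> \<Delta> `` {(p, p)}"
      using equiv_Delta by (auto simp: equiv_def dest: transD)
  qed
qed (use assms in auto)

lemma add_B_classes:
  assumes "(p, y) \<in> \<alpha>" "(q, p) \<in> \<alpha>"
  shows "add_B (\<Delta> `` {(p, y)}) (\<Delta> `` {(q, p)}) = \<Delta> `` {(q, y)}"
proof -
  have pS: "p \<in> S" and qS: "q \<in> S"
    using assms \<alpha>_carrier by blast+
  have "add_B (\<Delta> `` {(p, y)}) (\<Delta> `` {(q, p)})
      = app3 (quot_ops (pair_ops F) \<Delta>) d (\<Delta> `` {(p, y)}) (\<Delta> `` {(p, p)}) (\<Delta> `` {(q, p)})"
    using zero_B_eq[OF pS] by simp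
  also have "\<dots> = \<Delta> `` {app3 (pair_ops F) d (p, y) (p, p) (q, p)}"
    by (rule app3_quot_ops[OF is_alg_pair_ops[OF compatible_\<alpha>] congruence_Delta wf_d])
      (use assms \<alpha>_refl pS in auto)
  also have "app3 (pair_ops F) d (p, y) (p, p) (q, p) = (q, y)"
    unfolding app3_pair_ops using assms D_eq_third D_eq_first pS qS \<alpha>_sym by simp
  finally show ?thesis .
qed

context
  fixes r :: "'a \<Rightarrow> 'a"
  assumes trace: "is_trace S \<alpha> r"
begin

lemma trace_related: "x \<in> S \<Longrightarrow> (r x, x) \<in> \<alpha>"
  using trace by (simp add: is_trace_def)

lemma trace_eq: "(x, y) \<in> \<alpha> \<Longrightarrow> r x = r y"
  using trace by (simp add: is_trace_def)

abbreviation cocycle :: "'f \<Rightarrow> 'a set list \<Rightarrow> ('a \<times> 'a) set" where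
  "cocycle f Qs \<equiv> \<Delta> `` {(r (F f (map rep Qs)), F f (map (r \<circ> rep) Qs))}"

definition split_iso :: "'a \<Rightarrow> ('a \<times> 'a) set \<times> 'a set" where
  "split_iso x = (\<Delta> `` {(r x, x)}, \<alpha> `` {x})"

lemma inj_on_split_iso: "inj_on split_iso S"
proof (rule inj_onI)
  fix x y assume x: "x \<in> S" and y: "y \<in> S" and eq: "split_iso x = split_iso y"
  then have "(x, y) \<in> \<alpha>"
    using eq_equiv_class_iff[OF equiv_\<alpha>] by (simp add: split_iso_def)
  then have rxy: "r x = r y"
    by (rule trace_eq)
  from eq have "((r x, x), (r y, y)) \<in> \<Delta>"
    using eq_equiv_class_iff[OF equiv_Delta] trace_related x y by (simp add: split_iso_def)
  then have "y = D x (r x) (r x)"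
    by (simp add: Delta_eq_diff_rel diff_rel_iff rxy)
  also have "\<dots> = x"
    using D_eq_first \<alpha>_sym trace_related x by blast
  finally show "x = y" by simp
qed

lemma split_iso_image: "split_iso ` S = (\<alpha> // \<Delta>) \<times> (S // \<alpha>)"
proof
  show "split_iso ` S \<subseteq> (\<alpha> // \<Delta>) \<times> (S // \<alpha>)"
    using trace_related by (auto simp: split_iso_def intro: quotientI)
  show "(\<alpha> // \<Delta>) \<times> (S // \<alpha>) \<subseteq> split_iso ` S"
  proof clarify
    fix P Q assume "P \<in> \<alpha> // \<Delta>" "Q \<in> S // \<alpha>"
    then obtain a b z where ab: "(a, b) \<in> \<alpha>" "P = \<Delta> `` {(a, b)}" and z: "z \<in> S" "Q = \<alpha> `` {z}"
      by (auto elim!: quotientE)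
    define x where "x = D b a (r z)"
    have rz: "r z \<in> S"
      using trace_related z \<alpha>_carrier by blast
    have "((a, b), (r z, x)) \<in> \<Delta>"
      unfolding x_def by (rule translate_in_Delta[OF ab(1) rz])
    then have x\<alpha>: "(r z, x) \<in> \<alpha>"
      using equiv_Delta by (auto simp: equiv_def)
    then have "(x, z) \<in> \<alpha>"
      using \<alpha>_sym \<alpha>_trans trace_related z by blast
    moreover from this have "r x = r z"
      by (rule trace_eq)
    ultimately have "split_iso x = (P, Q)"
      using \<open>((a, b), (r z, x)) \<in> \<Delta>\<close> ab z equiv_class_eq_iff[OF equiv_Delta] equiv_class_eq_iff[OF equiv_\<alpha>]
      by (auto simp: split_iso_def)
    moreover have "x \<in> S"
      using x\<alpha> \<alpha>_carrier by blast
    ultimately show "(P, Q) \<in> split_iso ` S"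
      by (metis image_eqI)
  qed
qed

lemma hom_split_iso:
  "hom ar S F (tensor_ops (quot_ops (pair_ops F) \<Delta>) (quot_ops F \<alpha>) add_B cocycle) split_iso"
  unfolding hom_def
proof (intro allI impI)
  fix f xs assume l: "length xs = ar f" and xs: "set xs \<subseteq> S"
  define y where "y = F f xs"
  define p where "p = F f (map r xs)"
  have "list_all2 (\<lambda>x y. (x, y) \<in> \<alpha>) (map r xs) xs"
    using xs trace_related by (auto simp: list_all2_map1 list_all2_same)
  then have py: "(p, y) \<in> \<alpha>"
    unfolding p_def y_def using compatible_\<alpha> l by (simp add: compatible_def)
  have reps: "(x, rep (\<alpha> `` {x})) \<in> \<alpha>" if "x \<in> set xs" for x
    using rep_related[OF equiv_\<alpha>] xs that by blast
  have "quot_ops (pair_ops F) \<Delta> f (map (\<lambda>x. \<Delta> `` {x}) (map (\<lambda>x. (r x, x)) xs)) = \<Delta> `` {(p, y)}"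
    by (subst quot_ops_classes[OF congruence_Delta])
      (use l xs trace_related in \<open>auto simp: pair_ops_def p_def y_def comp_def\<close>)
  then have B: "quot_ops (pair_ops F) \<Delta> f (map fst (map split_iso xs)) = \<Delta> `` {(p, y)}"
    by (simp add: split_iso_def comp_def)
  have Q: "quot_ops F \<alpha> f (map snd (map split_iso xs)) = \<alpha> `` {y}"
    unfolding y_def using quot_ops_classes[OF cong l xs] by (simp add: split_iso_def comp_def)
  have "map (r \<circ> rep) (map (\<lambda>x. \<alpha> `` {x}) xs) = map r xs"
    unfolding map_map by (rule map_cong) (simp_all add: trace_eq[OF reps])
  moreover have "list_all2 (\<lambda>x y. (x, y) \<in> \<alpha>) xs (map rep (map (\<lambda>x. \<alpha> `` {x}) xs))"
    using reps by (simp add: list_all2_map2 list_all2_same)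
  then have "r (F f (map rep (map (\<lambda>x. \<alpha> `` {x}) xs))) = r y"
    unfolding y_def using compatible_\<alpha> l by (metis compatible_def trace_eq)
  moreover have "map snd (map split_iso xs) = map (\<lambda>x. \<alpha> `` {x}) xs"
    by (simp add: split_iso_def)
  ultimately have T: "cocycle f (map snd (map split_iso xs)) = \<Delta> `` {(r y, p)}"
    by (simp only: p_def)
  have "y \<in> S"
    using py \<alpha>_carrier by blast
  then have "(r y, p) \<in> \<alpha>"
    using trace_related \<alpha>_trans \<alpha>_sym py by blast
  then have "add_B (\<Delta> `` {(p, y)}) (\<Delta> `` {(r y, p)}) = \<Delta> `` {(r y, y)}"
    by (rule add_B_classes[OF py])
  then show "split_iso (F f xs) = tensor_ops (quot_ops (pair_ops F) \<Delta>) (quot_ops F \<alpha>) add_B cocycle f (map split_iso xs)"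
    unfolding tensor_ops_def B Q T by (simp add: split_iso_def y_def)
qed

theorem isomorphic_tensor:
  "isomorphic ar S F ((\<alpha> // \<Delta>) \<times> (S // \<alpha>)) (tensor_ops (quot_ops (pair_ops F) \<Delta>) (quot_ops F \<alpha>) add_B cocycle)"
  unfolding isomorphic_def bij_betw_def using inj_on_split_iso split_iso_image hom_split_iso by blast

end

end

theorem corollary2p5:
  fixes ar :: "'f \<Rightarrow> nat"
    and E :: "(('f, nat) trm \<times> ('f, nat) trm) set"
    and d :: "('f, nat) trm"
    and S :: "'a set" and F :: "'f \<Rightarrow> 'a list \<Rightarrow> 'a"
    and \<alpha> :: "'a rel" and r :: "'a \<Rightarrow> 'a"
  assumes dV1: "diff_term_variety ar E d TYPE('a)"
    and dV2: "diff_term_variety ar E d TYPE('a \<times> 'a)"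
    and dV3: "diff_term_variety ar E d TYPE(('a \<times> 'a) set)"
    and A: "is_alg ar S F" and AV: "models ar S F E"
    and \<alpha>: "congruence ar S F \<alpha>"
    and central: "commutator ar S F \<alpha> (S \<times> S) = Id_on S"
    and r: "is_trace S \<alpha> r"
  shows "let \<Delta> = Delta ar S F \<alpha> (S \<times> S);
             FB = quot_ops (pair_ops F) \<Delta>;
             zero = \<Delta> `` Id_on S;
             addB = (\<lambda>x y. app3 FB d x zero y);
             T = (\<lambda>f Qs. \<Delta> `` {(r (F f (map rep Qs)), F f (map (r \<circ> rep) Qs))})
         in isomorphic ar S F ((\<alpha> // \<Delta>) \<times> (S // \<alpha>)) (tensor_ops FB (quot_ops F \<alpha>) addB T)"
proof -
  have "wf_trm ar d" "is_diff_term ar S F d"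
    using dV1 A AV by (auto simp: diff_term_variety_def)
  then interpret central_congruence ar S F \<alpha> d
    using A \<alpha> central by unfold_locales
  show ?thesis
    unfolding Let_def by (rule isomorphic_tensor[OF r])
qed

end
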